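(* Let $n\ge1$ and consider nonempty compact subsets of $\mathbb{R}^n$ ("regions") whose complement is nonempty. For a region $R$ and $\mathbf{x}\in\mathbb{R}^n$ let $d(R,\mathbf{x})=\inf\{\|\mathbf{x}-\mathbf{y}\|_2:\mathbf{y}\in R\}$, and similarly $d(R^c,\mathbf{x})$ for the complement $R^c=\mathbb{R}^n\setminus R$. Define the boundary dissimilarity $$d_{\mathrm{bd}}(R_1,R_2)=\begin{cases}-\min_{\mathbf{x}_2\in R_2} d(R_1^c,\mathbf{x}_2) & \text{if } R_2\subseteq R_1,\\ \sup_{\mathbf{x}_2\in R_2\setminus R_1} d(R_1,\mathbf{x}_2) & \text{otherwise.}\end{cases}$$ Then: (1) $d_{\mathrm{bd}}(R_1,R_2)\le 0$ if and only if $R_2\subseteq R_1$. Moreover, $d_{\mathrm{bd}}(R_1,R_2)=0$ if and only if $R_2$ is internally tangent to $R_1$, that is, $R_2\subseteq R_1$ and the boundaries $\partial R_1$ and $\partial R_2$ have a common point. (2) If $R_3\subseteq R_2\subseteq R_1$, then $d_{\mathrm{bd}}(R_1,R_3)\le d_{\mathrm{bd}}(R_1,R_2)$. *)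

theory Defs
  imports "HOL-Analysis.Analysis"
begin

definition region :: "'a::euclidean_space set \<Rightarrow> bool" where
  "region R \<longleftrightarrow> R \<noteq> {} \<and> compact R \<and> - R \<noteq> {}"

text \<open>Boundary dissimilarity. d(R,x) is infdist x R; the min in the first case
  is attained (continuous function on a nonempty compact set), so it is written as INF.\<close>
definition d_bd :: "'a::euclidean_space set \<Rightarrow> 'a set \<Rightarrow> real" where
  "d_bd R1 R2 =
     (if R2 \<subseteq> R1 then - (INF x2\<in>R2. infdist x2 (- R1))
      else (SUP x2\<in>R2 - R1. infdist x2 R1))"

definition internally_tangent :: "'a::euclidean_space set \<Rightarrow> 'a set \<Rightarrow> bool" where
  "internally_tangent R2 R1 \<longleftrightarrow> R2 \<subseteq> R1 \<and> frontier R1 \<inter> frontier R2 \<noteq> {}"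

end

theory Submission
  imports Defs
begin

text \<open>When \<open>R\<^sub>2 \<subseteq> R\<^sub>1\<close>, the dissimilarity is minus the set distance from \<open>R\<^sub>2\<close> to the
  complement of \<open>R\<^sub>1\<close>, so its sign and monotonicity follow from the library theory of
  \<^const>\<open>setdist\<close>: it is nonnegative, antitone in each argument, and for a bounded set it
  vanishes exactly when the closures meet; the closures of \<open>R\<^sub>2\<close> and \<open>-R\<^sub>1\<close> meet exactly in
  the common boundary points. Otherwise some point of \<open>R\<^sub>2\<close> lies at positive distance from
  the closed set \<open>R\<^sub>1\<close>, and the supremum is positive.\<close>

lemma d_bd_subset_eq_setdist:
  assumes "R2 \<noteq> {}" "R2 \<subseteq> R1"
  shows "d_bd R1 R2 = - setdist R2 (- R1)"
  using assms by (simp add: d_bd_def setdist_eq_infdist)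

lemma d_bd_pos_if_not_subset:
  fixes R1 R2 :: "'a::euclidean_space set"
  assumes "closed R1" "R1 \<noteq> {}" "bounded R2" "\<not> R2 \<subseteq> R1"
  shows "0 < d_bd R1 R2"
proof -
  obtain x where x: "x \<in> R2" "x \<notin> R1"
    using assms(4) by blast
  have "bounded (closure R2)"
    using assms(3) by (rule bounded_closure)
  then have "compact ((\<lambda>y. infdist y R1) ` closure R2)"
    by (intro compact_continuous_image continuous_intros) (simp add: compact_eq_bounded_closed)
  then have "bdd_above ((\<lambda>y. infdist y R1) ` (R2 - R1))"
    by (rule bdd_above_mono[OF bounded_imp_bdd_above[OF compact_imp_bounded]])
      (use closure_subset in blast)
  then have "infdist x R1 \<le> (SUP y\<in>R2 - R1. infdist y R1)"
    using x by (intro cSUP_upper) auto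
  moreover have "0 < infdist x R1"
    using infdist_pos_not_in_closed[OF assms(1,2) x(2)] .
  ultimately show ?thesis
    using assms(4) by (simp add: d_bd_def)
qed

lemma d_bd_nonpos_iff_subset:
  fixes R1 R2 :: "'a::euclidean_space set"
  assumes "closed R1" "R1 \<noteq> {}" "bounded R2" "R2 \<noteq> {}"
  shows "d_bd R1 R2 \<le> 0 \<longleftrightarrow> R2 \<subseteq> R1"
  using assms d_bd_pos_if_not_subset[OF assms(1-3)] d_bd_subset_eq_setdist[OF assms(4)]
  by (metis neg_le_0_iff_le not_le setdist_pos_le)

lemma frontier_Int_frontier_closed_subset:
  assumes "closed T" "T \<subseteq> S"
  shows "frontier S \<inter> frontier T = T \<inter> closure (- S)"
proof -
  have "closure (- S) \<subseteq> closure (- T)"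
    using assms(2) by (intro closure_mono) auto
  moreover have "T \<subseteq> closure S"
    using assms(2) closure_subset by blast
  ultimately show ?thesis
    using assms(1) by (auto simp: frontier_closures)
qed

lemma d_bd_eq_0_iff_internally_tangent:
  fixes R1 R2 :: "'a::euclidean_space set"
  assumes "region R1" "region R2"
  shows "d_bd R1 R2 = 0 \<longleftrightarrow> internally_tangent R2 R1"
proof (cases "R2 \<subseteq> R1")
  case True
  have "closed R2" "bounded R2" "R2 \<noteq> {}" "- R1 \<noteq> {}"
    using assms by (auto simp: region_def compact_imp_closed compact_imp_bounded)
  then have "setdist R2 (- R1) = 0 \<longleftrightarrow> R2 \<inter> closure (- R1) \<noteq> {}"
    by (simp add: setdist_eq_0_bounded)
  then show ?thesis
    using True \<open>closed R2\<close> \<open>R2 \<noteq> {}\<close>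
    by (simp add: d_bd_subset_eq_setdist internally_tangent_def frontier_Int_frontier_closed_subset)
next
  case False
  then show ?thesis
    using assms d_bd_pos_if_not_subset[of R1 R2]
    by (auto simp: region_def internally_tangent_def compact_imp_closed compact_imp_bounded)
qed

lemma d_bd_antimono:
  assumes "R3 \<noteq> {}" "R3 \<subseteq> R2" "R2 \<subseteq> R1"
  shows "d_bd R1 R3 \<le> d_bd R1 R2"
proof -
  have "R2 \<noteq> {}"
    using assms(1,2) by blast
  then show ?thesis
    using assms setdist_subset_left[OF assms(1,2), of "- R1"]
    by (simp add: d_bd_subset_eq_setdist)
qed

theorem proposition3:
  fixes R1 R2 R3 :: "'a::euclidean_space set"
  assumes "region R1" and "region R2"
  shows "(d_bd R1 R2 \<le> 0 \<longleftrightarrow> R2 \<subseteq> R1)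
         \<and> (d_bd R1 R2 = 0 \<longleftrightarrow> internally_tangent R2 R1)
         \<and> (region R3 \<and> R3 \<subseteq> R2 \<and> R2 \<subseteq> R1 \<longrightarrow> d_bd R1 R3 \<le> d_bd R1 R2)"
proof (intro conjI impI)
  show "d_bd R1 R2 \<le> 0 \<longleftrightarrow> R2 \<subseteq> R1"
    using assms by (intro d_bd_nonpos_iff_subset)
      (auto simp: region_def compact_imp_closed compact_imp_bounded)
  show "d_bd R1 R2 = 0 \<longleftrightarrow> internally_tangent R2 R1"
    using assms by (rule d_bd_eq_0_iff_internally_tangent)
  show "d_bd R1 R3 \<le> d_bd R1 R2" if "region R3 \<and> R3 \<subseteq> R2 \<and> R2 \<subseteq> R1"
    using that by (intro d_bd_antimono) (auto simp: region_def)
qed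

end
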